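(* Let $q\in\mathbb{C}$ with $0<|q|<1$ and $l,m,n,u\in\mathbb{N}$. Then \[ \sum_{k=0}^\infty\frac{q^{k^2} (q)_{l+m+n-k}} {(q)_k (q)_{l-k}(q)_{m-k}(q)_{n-k} (q)_{u+k}} =\sum_{k=-\infty}^\infty\frac{(-1)^k q^{(5k^2-k)/2} (q)_{l+m}(q)_{l+n}(q)_{m+n}(q)_u} {(q)_{l-k}(q)_{m-k}(q)_{n-k}(q)_{u-k}(q)_{l+k}(q)_{m+k}(q)_{n+k}(q)_{u+k}}, \] and \[ \sum_{k=0}^\infty\frac{q^{k^2+k} (q)_{l+m+n-k+1}} {(q)_k (q)_{l-k}(q)_{m-k}(q)_{n-k}(q)_{u+k+1}} =\sum_{k=-\infty}^\infty\frac{(-1)^k q^{(5k^2+3k)/2} (q)_{l+m+1}(q)_{l+n+1}(q)_{m+n+1}(q)_u} {(q)_{l-k}(q)_{m-k}(q)_{n-k}(q)_{u-k}(q)_{l+k+1}(q)_{m+k+1}(q)_{n+k+1}(q)_{u+k+1}}. \]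
   Context: $(q)_n=(q;q)_n=(1-q)(1-q^2)\cdots(1-q^n)$ for $n\ge0$ (with $(q)_0=1$), and $1/(q)_n=0$ for $n<0$. *)

theory Defs
  imports "HOL-Analysis.Analysis"
begin

text \<open>(q;q)_n for an integer index n; for n \<le> 0 this is the empty product 1.
  It is only ever used for n \<ge> 0 in a nonzero term.\<close>
definition qpoch :: "complex \<Rightarrow> int \<Rightarrow> complex" where
  "qpoch q n = (\<Prod>i\<in>{1..n}. 1 - q powi i)"

definition qinv :: "complex \<Rightarrow> int \<Rightarrow> complex" where
  "qinv q n = (if n < 0 then 0 else 1 / qpoch q n)"

end

theory Submission
  imports Defs
begin

text \<open>
  Both series are finite, so the identities are identities between rational functions of q,
  and it suffices that q is nonzero and not a root of unity. Let e = 0 for the first identity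
  and e = 1 for the second, and let K_j(r) = 1/((q)_{j-r} (q)_{j+r+e}) be the Bailey kernel
  relative to a = q^e, with r ranging over all integers. Cauchy's q-binomial theorem shows
  that alpha_r = (-1)^r q^{r(r-1)/2} is orthogonal to the kernel, sum_r alpha_r K_j(r) = delta_{j0}
  (the unit Bailey pair). The q-Chu-Vandermonde sum expands q^{r^2+er} K_k(r) K_u(r) in the
  K_j(r), so summing it against alpha_r leaves 1/((q)_{k+u+e} (q)_k (q)_u). The
  q-Pfaff-Saalschuetz sum expands q^{r^2+er} (q)_{l+m+e} (q)_{l+n+e} (q)_{m+n+e} K_l(r) K_m(r) K_n(r)
  in the K_k(r), with the coefficients of the left-hand side. Inserting this into the right-hand
  side and interchanging the two finite sums gives the left-hand side. Both summation formulas
  are proved by creative telescoping with explicit certificates.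
\<close>

lemma qpoch_nonpos: "n \<le> 0 \<Longrightarrow> qpoch q n = 1"
  unfolding qpoch_def by simp

lemma qpoch_rec: "n \<ge> 1 \<Longrightarrow> qpoch q n = (1 - q powi n) * qpoch q (n - 1)"
proof -
  assume "n \<ge> 1"
  then have "{1..n} = insert n {1..n - 1}" by auto
  then show ?thesis unfolding qpoch_def by simp
qed

lemma qinv_neg: "n < 0 \<Longrightarrow> qinv q n = 0"
  unfolding qinv_def by simp

lemma qinv_0: "qinv q 0 = 1"
  unfolding qinv_def qpoch_def by simp

locale q_not_root_of_unity =
  fixes q :: complex
  assumes q_nonzero: "q \<noteq> 0"
    and not_root_of_unity: "\<And>n. n > 0 \<Longrightarrow> q ^ n \<noteq> 1"
begin

lemma powi_add: "q powi (m + n) = q powi m * q powi n"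
  by (simp add: power_int_add q_nonzero)

lemma powi_diff: "q powi (m - n) = q powi m / q powi n"
  by (simp add: power_int_diff q_nonzero)

lemma one_minus_powi_nonzero: "i \<ge> 1 \<Longrightarrow> 1 - q powi i \<noteq> 0"
  using not_root_of_unity[of "nat i"] by (simp add: power_int_def)

lemma qpoch_nonzero: "qpoch q n \<noteq> 0"
  unfolding qpoch_def using one_minus_powi_nonzero by auto

lemma qpoch_qinv: "n \<ge> 0 \<Longrightarrow> qpoch q n * qinv q n = 1"
  unfolding qinv_def using qpoch_nonzero by simp

lemma qinv_pred: "qinv q (n - 1) = (1 - q powi n) * qinv q n"
proof (cases "n \<ge> 1")
  case True
  then show ?thesis
    using qpoch_rec[OF True] one_minus_powi_nonzero[OF True] qpoch_nonzero[of n] qpoch_nonzero[of "n - 1"]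
    by (simp add: qinv_def field_simps)
next
  case False
  then show ?thesis by (cases "n = 0") (auto simp: qinv_def)
qed

lemma powi_quadratic_succ:
  "q powi ((i + 1) * (i + 1) + a * (i + 1)) = q powi (i * i + a * i) * (q * q powi i * q powi i * q powi a)"
proof -
  have "(i + 1) * (i + 1) + a * (i + 1) = (i * i + a * i) + (1 + (i + (i + a)))"
    by (simp add: algebra_simps)
  then show ?thesis by (simp only: powi_add) (simp add: mult_ac)
qed

lemma powi_quadratic_reflect: "q powi ((- r - e) * (- r - e) + e * (- r - e)) = q powi (r * r + e * r)"
  by (simp add: algebra_simps)

lemma powi_quadratic_shift:
  "q powi ((i + r) * (i + r) + e * (i + r)) = q powi (r * r + e * r) * q powi (i * i + (2 * r + e) * i)"
proof -
  have "(i + r) * (i + r) + e * (i + r) = (r * r + e * r) + (i * i + (2 * r + e) * i)"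
    by (simp add: algebra_simps)
  then show ?thesis by (simp only: powi_add)
qed

end

section \<open>Summation by creative telescoping\<close>

lemma creative_telescoping:
  fixes T G :: "nat \<Rightarrow> nat \<Rightarrow> 'a::field" and c d R :: "nat \<Rightarrow> 'a"
  assumes certificate: "\<And>N i. c N * T (Suc N) i - d N * T N i = G N (Suc i) - G N i"
    and G_boundary: "\<And>N. G N 0 = 0" "\<And>N. G N (N + 2) = 0"
    and T_vanishes: "\<And>N. T N (Suc N) = 0"
    and R_rec: "\<And>N. c N * R (Suc N) = d N * R N"
    and c_nonzero: "\<And>N. c N \<noteq> 0"
    and initial: "T 0 0 = R 0"
  shows "(\<Sum>i\<le>N. T N i) = R N"
proof (induction N)
  case 0
  then show ?case using initial by simp
next
  case (Suc N)
  have "(\<Sum>i<N + 2. c N * T (Suc N) i - d N * T N i) = (\<Sum>i<N + 2. G N (Suc i) - G N i)"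
    by (simp only: certificate)
  also have "\<dots> = 0"
    using G_boundary by (simp only: sum_lessThan_telescope) simp
  finally have "c N * (\<Sum>i<N + 2. T (Suc N) i) = d N * (\<Sum>i<N + 2. T N i)"
    by (simp only: sum_subtractf sum_distrib_left[symmetric] right_minus_eq)
  then have "c N * (\<Sum>i\<le>Suc N. T (Suc N) i) = d N * R N"
    using Suc.IH T_vanishes[of N] by (simp add: lessThan_Suc_atMost)
  then show ?case
    using R_rec[of N] c_nonzero[of N] by (metis mult_left_cancel)
qed

lemma sum_atMost_of_nat: "(\<Sum>i\<le>N. f (int i)) = (\<Sum>i\<in>{0..int N}. f i)"
  by (rule sum.reindex_bij_witness[of _ nat int]) auto

context q_not_root_of_unity
begin

definition vandermonde_term :: "int \<Rightarrow> int \<Rightarrow> int \<Rightarrow> int \<Rightarrow> complex" where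
  "vandermonde_term K U a i = q powi (i * i + a * i) * qinv q (K - i) * qinv q (U - i) * qinv q i * qinv q (i + a)"

definition vandermonde_telescoper :: "int \<Rightarrow> int \<Rightarrow> int \<Rightarrow> int \<Rightarrow> complex" where
  "vandermonde_telescoper K U a i =
     - (q powi (U - i)) * q powi (i * i + a * i)
       * qinv q (K - i) * qinv q (U - i) * qinv q (i - 1) * qinv q (i + a - 1)"

lemma vandermonde_certificate:
  "(1 - q powi U) * (1 - q powi (U + a)) * vandermonde_term K U a i
     - (1 - q powi (K + U + a)) * vandermonde_term K (U - 1) a i
   = vandermonde_telescoper K U a (i + 1) - vandermonde_telescoper K U a i"
proof -
  define B where "B = q powi (i * i + a * i) * qinv q (K - i) * qinv q (U - i) * qinv q i * qinv q (i + a)"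
  define X where "X = q powi i"
  define Uq where "Uq = q powi U"
  define Kq where "Kq = q powi K"
  define Aq where "Aq = q powi a"
  text \<open>Every term is B times a rational function of q, q^i, q^U, q^K and q^a, so the
    certificate identity reduces to an identity of rational functions.\<close>
  have X: "X \<noteq> 0" unfolding X_def using q_nonzero by simp
  have U_pred: "qinv q (U - 1 - i) = (1 - Uq / X) * qinv q (U - i)"
       "qinv q (U - (i + 1)) = (1 - Uq / X) * qinv q (U - i)"
    using qinv_pred[of "U - i"] by (simp_all add: X_def Uq_def powi_diff algebra_simps)
  have K_pred: "qinv q (K - (i + 1)) = (1 - Kq / X) * qinv q (K - i)"
    using qinv_pred[of "K - i"] by (simp add: X_def Kq_def powi_diff algebra_simps)
  have i_pred: "qinv q (i - 1) = (1 - X) * qinv q i" "qinv q (i + a - 1) = (1 - X * Aq) * qinv q (i + a)"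
    using qinv_pred[of i] qinv_pred[of "i + a"] by (simp_all add: X_def Aq_def powi_add)
  have T: "vandermonde_term K U a i = B"
    unfolding vandermonde_term_def B_def by simp
  have T_pred: "vandermonde_term K (U - 1) a i = (1 - Uq / X) * B"
    unfolding vandermonde_term_def B_def by (simp add: U_pred mult_ac)
  have G_succ: "vandermonde_telescoper K U a (i + 1)
      = - (Uq / (X * q)) * (q * X * X * Aq) * (1 - Kq / X) * (1 - Uq / X) * B"
    unfolding vandermonde_telescoper_def B_def
    using K_pred U_pred powi_quadratic_succ[of i a, folded X_def Aq_def]
    by (simp add: powi_diff powi_add X_def Uq_def mult_ac)
  have G: "vandermonde_telescoper K U a i = - (Uq / X) * (1 - X) * (1 - X * Aq) * B"
    unfolding vandermonde_telescoper_def B_def using i_pred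
    by (simp add: powi_diff X_def Uq_def mult_ac)
  show ?thesis
    unfolding T T_pred G_succ G using X q_nonzero
    by (simp add: powi_add Uq_def[symmetric] Kq_def[symmetric] Aq_def[symmetric] field_simps)
qed

lemma q_vandermonde:
  assumes "K \<ge> 0" "a \<ge> 0" "U \<ge> 0"
  shows "(\<Sum>i\<in>{0..U}. vandermonde_term K U a i)
       = qpoch q (K + U + a) * qinv q K * qinv q U * qinv q (K + a) * qinv q (U + a)"
proof -
  define R where "R N = qpoch q (K + int N + a) * qinv q K * qinv q (int N) * qinv q (K + a) * qinv q (int N + a)"
    for N :: nat
  obtain M where M: "U = int M" using \<open>U \<ge> 0\<close> nonneg_eq_int by blast
  have "(\<Sum>i\<le>M. vandermonde_term K (int M) a (int i)) = R M"
  proof (rule creative_telescoping[where G = "\<lambda>N i. vandermonde_telescoper K (int N + 1) a (int i)"])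
    fix N i
    show "(1 - q powi (int N + 1)) * (1 - q powi (int N + 1 + a)) * vandermonde_term K (int (Suc N)) a (int i)
        - (1 - q powi (K + (int N + 1) + a)) * vandermonde_term K (int N) a (int i)
        = vandermonde_telescoper K (int N + 1) a (int (Suc i)) - vandermonde_telescoper K (int N + 1) a (int i)"
      using vandermonde_certificate[of "int N + 1" a K "int i"] by (simp add: add.commute)
    show "(1 - q powi (int N + 1)) * (1 - q powi (int N + 1 + a)) * R (Suc N)
        = (1 - q powi (K + (int N + 1) + a)) * R N"
    proof -
      have "qpoch q (K + int (Suc N) + a) = (1 - q powi (K + (int N + 1) + a)) * qpoch q (K + int N + a)"
        using qpoch_rec[of "K + (int N + 1) + a"] \<open>K \<ge> 0\<close> \<open>a \<ge> 0\<close> by (simp add: algebra_simps)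
      moreover have "qinv q (int N) = (1 - q powi (int N + 1)) * qinv q (int (Suc N))"
        using qinv_pred[of "int N + 1"] by (simp add: add.commute)
      moreover have "qinv q (int N + a) = (1 - q powi (int N + 1 + a)) * qinv q (int (Suc N) + a)"
        using qinv_pred[of "int N + 1 + a"] by (simp add: algebra_simps)
      ultimately show ?thesis
        unfolding R_def by (simp only:) (simp add: algebra_simps)
    qed
    show "(1 - q powi (int N + 1)) * (1 - q powi (int N + 1 + a)) \<noteq> 0"
      using one_minus_powi_nonzero \<open>a \<ge> 0\<close> by simp
    show "vandermonde_term K (int 0) a (int 0) = R 0"
      using qpoch_qinv[of "K + a"] \<open>K \<ge> 0\<close> \<open>a \<ge> 0\<close>
      unfolding vandermonde_term_def R_def by (simp add: qinv_0 mult_ac)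
  qed (auto simp: vandermonde_telescoper_def vandermonde_term_def qinv_neg)
  then show ?thesis
    unfolding M R_def sum_atMost_of_nat[where f = "vandermonde_term K (int M) a"] .
qed

definition saalschuetz_term :: "int \<Rightarrow> int \<Rightarrow> int \<Rightarrow> int \<Rightarrow> int \<Rightarrow> complex" where
  "saalschuetz_term L M N a i = q powi (i * i + a * i) * qpoch q (L + M + N + a - i)
     * qinv q (L - i) * qinv q (M - i) * qinv q (N - i) * qinv q i * qinv q (i + a)"

definition saalschuetz_telescoper :: "int \<Rightarrow> int \<Rightarrow> int \<Rightarrow> int \<Rightarrow> int \<Rightarrow> complex" where
  "saalschuetz_telescoper L M N a i = - (q powi (N - i)) * q powi (i * i + a * i) * qpoch q (L + M + N + a - i)
     * qinv q (L - i) * qinv q (M - i) * qinv q (N - i) * qinv q (i - 1) * qinv q (i + a - 1)"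

lemma saalschuetz_certificate:
  assumes "L \<ge> 0" "M \<ge> 0" "N \<ge> 1" "a \<ge> 0"
  shows "(1 - q powi N) * (1 - q powi (N + a)) * saalschuetz_term L M N a i
     - (1 - q powi (L + N + a)) * (1 - q powi (M + N + a)) * saalschuetz_term L M (N - 1) a i
   = saalschuetz_telescoper L M N a (i + 1) - saalschuetz_telescoper L M N a i"
proof (cases "0 \<le> i \<and> i \<le> L \<and> i \<le> M \<and> i \<le> N")
  case False
  then show ?thesis by (auto simp: saalschuetz_term_def saalschuetz_telescoper_def qinv_neg)
next
  case True
  define B where "B = q powi (i * i + a * i) * qpoch q (L + M + N + a - i - 1)
     * qinv q (L - i) * qinv q (M - i) * qinv q (N - i) * qinv q i * qinv q (i + a)"
  define X where "X = q powi i"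
  define Lq where "Lq = q powi L"
  define Mq where "Mq = q powi M"
  define Nq where "Nq = q powi N"
  define Aq where "Aq = q powi a"
  have X: "X \<noteq> 0" unfolding X_def using q_nonzero by simp
  have top_rec: "qpoch q (L + M + N + a - i) = (1 - Lq * Mq * Nq * Aq / X) * qpoch q (L + M + N + a - i - 1)"
    using qpoch_rec[of "L + M + N + a - i"] True assms
    by (simp add: powi_add powi_diff Lq_def Mq_def Nq_def Aq_def X_def)
  have top_shift: "qpoch q (L + M + (N - 1) + a - i) = qpoch q (L + M + N + a - i - 1)"
    "qpoch q (L + M + N + a - (i + 1)) = qpoch q (L + M + N + a - i - 1)"
    by (simp_all add: algebra_simps)
  have N_pred: "qinv q (N - 1 - i) = (1 - Nq / X) * qinv q (N - i)"
    "qinv q (N - (i + 1)) = (1 - Nq / X) * qinv q (N - i)"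
    using qinv_pred[of "N - i"] by (simp_all add: X_def Nq_def powi_diff algebra_simps)
  have LM_pred: "qinv q (L - (i + 1)) = (1 - Lq / X) * qinv q (L - i)"
    "qinv q (M - (i + 1)) = (1 - Mq / X) * qinv q (M - i)"
    using qinv_pred[of "L - i"] qinv_pred[of "M - i"]
    by (simp_all add: X_def Lq_def Mq_def powi_diff algebra_simps)
  have i_pred: "qinv q (i - 1) = (1 - X) * qinv q i" "qinv q (i + a - 1) = (1 - X * Aq) * qinv q (i + a)"
    using qinv_pred[of i] qinv_pred[of "i + a"] by (simp_all add: X_def Aq_def powi_add)
  have T: "saalschuetz_term L M N a i = (1 - Lq * Mq * Nq * Aq / X) * B"
    unfolding saalschuetz_term_def B_def using top_rec by (simp add: mult_ac)
  have T_pred: "saalschuetz_term L M (N - 1) a i = (1 - Nq / X) * B"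
    unfolding saalschuetz_term_def B_def using top_shift N_pred by (simp add: mult_ac)
  have G_succ: "saalschuetz_telescoper L M N a (i + 1)
      = - (Nq / (X * q)) * (q * X * X * Aq) * (1 - Lq / X) * (1 - Mq / X) * (1 - Nq / X) * B"
    unfolding saalschuetz_telescoper_def B_def
    using LM_pred N_pred powi_quadratic_succ[of i a, folded X_def Aq_def] top_shift
    by (simp add: powi_diff powi_add X_def Nq_def mult_ac)
  have G: "saalschuetz_telescoper L M N a i
      = - (Nq / X) * (1 - Lq * Mq * Nq * Aq / X) * (1 - X) * (1 - X * Aq) * B"
    unfolding saalschuetz_telescoper_def B_def using i_pred top_rec
    by (simp add: powi_diff X_def Nq_def mult_ac)
  show ?thesis
    unfolding T T_pred G_succ G using X q_nonzero
    by (simp add: powi_add Lq_def[symmetric] Mq_def[symmetric] Nq_def[symmetric] Aq_def[symmetric] field_simps)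
qed

lemma q_saalschuetz:
  assumes "L \<ge> 0" "M \<ge> 0" "a \<ge> 0" "N \<ge> 0"
  shows "(\<Sum>i\<in>{0..N}. saalschuetz_term L M N a i)
       = qpoch q (L + M + a) * qpoch q (L + N + a) * qpoch q (M + N + a)
         * qinv q L * qinv q M * qinv q N * qinv q (L + a) * qinv q (M + a) * qinv q (N + a)"
proof -
  define R where "R n = qpoch q (L + M + a) * qpoch q (L + int n + a) * qpoch q (M + int n + a)
     * qinv q L * qinv q M * qinv q (int n) * qinv q (L + a) * qinv q (M + a) * qinv q (int n + a)"
    for n :: nat
  obtain n' where n': "N = int n'" using \<open>N \<ge> 0\<close> nonneg_eq_int by blast
  have "(\<Sum>i\<le>n'. saalschuetz_term L M (int n') a (int i)) = R n'"
  proof (rule creative_telescoping[where G = "\<lambda>n i. saalschuetz_telescoper L M (int n + 1) a (int i)"])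
    fix n i
    show "(1 - q powi (int n + 1)) * (1 - q powi (int n + 1 + a)) * saalschuetz_term L M (int (Suc n)) a (int i)
        - (1 - q powi (L + (int n + 1) + a)) * (1 - q powi (M + (int n + 1) + a)) * saalschuetz_term L M (int n) a (int i)
        = saalschuetz_telescoper L M (int n + 1) a (int (Suc i)) - saalschuetz_telescoper L M (int n + 1) a (int i)"
      using saalschuetz_certificate[of L M "int n + 1" a "int i"] assms by (simp add: add.commute)
    show "(1 - q powi (int n + 1)) * (1 - q powi (int n + 1 + a)) * R (Suc n)
        = (1 - q powi (L + (int n + 1) + a)) * (1 - q powi (M + (int n + 1) + a)) * R n"
    proof -
      have "qpoch q (L + int (Suc n) + a) = (1 - q powi (L + (int n + 1) + a)) * qpoch q (L + int n + a)"
        "qpoch q (M + int (Suc n) + a) = (1 - q powi (M + (int n + 1) + a)) * qpoch q (M + int n + a)"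
        using qpoch_rec[of "L + (int n + 1) + a"] qpoch_rec[of "M + (int n + 1) + a"] assms
        by (simp_all add: algebra_simps)
      moreover have "qinv q (int n) = (1 - q powi (int n + 1)) * qinv q (int (Suc n))"
        using qinv_pred[of "int n + 1"] by (simp add: add.commute)
      moreover have "qinv q (int n + a) = (1 - q powi (int n + 1 + a)) * qinv q (int (Suc n) + a)"
        using qinv_pred[of "int n + 1 + a"] by (simp add: algebra_simps)
      ultimately show ?thesis
        unfolding R_def by (simp only:) (simp add: algebra_simps)
    qed
    show "(1 - q powi (int n + 1)) * (1 - q powi (int n + 1 + a)) \<noteq> 0"
      using one_minus_powi_nonzero \<open>a \<ge> 0\<close> by simp
    have "R 0 = qpoch q (L + M + a) * qinv q L * qinv q M * qinv q a
        * (qpoch q (L + a) * qinv q (L + a)) * (qpoch q (M + a) * qinv q (M + a))"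
      unfolding R_def by (simp add: qinv_0 mult_ac)
    then show "saalschuetz_term L M (int 0) a (int 0) = R 0"
      using qpoch_qinv[of "L + a"] qpoch_qinv[of "M + a"] assms
      unfolding saalschuetz_term_def by (simp add: qinv_0)
  qed (auto simp: saalschuetz_telescoper_def saalschuetz_term_def qinv_neg)
  then show ?thesis
    unfolding n' R_def sum_atMost_of_nat[where f = "saalschuetz_term L M (int n') a"] .
qed

end

section \<open>Cauchy's q-binomial theorem and the unit Bailey pair\<close>

lemma qpoch_of_nat: "qpoch q (int n) = (\<Prod>i<n. 1 - q ^ Suc i)"
  unfolding qpoch_def
  by (rule prod.reindex_bij_witness[of _ "\<lambda>i. int (Suc i)" "\<lambda>i. nat i - 1"]) (auto simp: power_int_def)

lemma minus_one_powi_diff: "(-1 :: 'a :: division_ring) powi (m - n) = (-1) powi m * (-1) powi n"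
  by (auto simp: power_int_minus_left)

lemma triangular_diff:
  fixes j s :: int
  shows "((j - s) * (j - s) - (j - s)) div 2 = (j * j - j) div 2 + (s * s - s) div 2 + (1 - j) * s"
proof -
  have "even (x * x - x)" for x :: int
    by (cases "even x") auto
  then obtain a b where "j * j - j = 2 * a" "s * s - s = 2 * b"
    by (metis evenE)
  moreover have "(j - s) * (j - s) - (j - s) = (j * j - j) + (s * s - s) + 2 * ((1 - j) * s)"
    by (simp add: algebra_simps)
  ultimately show ?thesis by simp
qed

context q_not_root_of_unity
begin

definition q_binomial_term :: "complex \<Rightarrow> int \<Rightarrow> int \<Rightarrow> complex" where
  "q_binomial_term z n s = (-1) powi s * q powi ((s * s - s) div 2) * qpoch q n * qinv q s * qinv q (n - s) * z powi s"

lemma q_binomial_term_rec: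
  assumes "n \<ge> 0" "z \<noteq> 0"
  shows "q_binomial_term z (n + 1) s = q_binomial_term z n s - z * q powi n * q_binomial_term z n (s - 1)"
proof -
  define B where "B = (-1) powi s * q powi ((s * s - s) div 2) * qpoch q n * qinv q s * qinv q (n + 1 - s) * z powi s"
  define Y where "Y = q powi s"
  define Nq where "Nq = q powi n"
  have Y: "Y \<noteq> 0" unfolding Y_def using q_nonzero by simp
  have top_rec: "qpoch q (n + 1) = (1 - q * Nq) * qpoch q n"
    using qpoch_rec[of "n + 1"] \<open>n \<ge> 0\<close> by (simp add: powi_add Nq_def mult_ac)
  have diff_pred: "qinv q (n - s) = (1 - q * Nq / Y) * qinv q (n + 1 - s)"
    using qinv_pred[of "n + 1 - s"] by (simp add: powi_add powi_diff Nq_def Y_def mult_ac)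
  have s_pred: "qinv q (s - 1) = (1 - Y) * qinv q s"
    using qinv_pred[of s] by (simp add: Y_def)
  have sign_pred: "(-1 :: complex) powi (s - 1) = - ((-1) powi s)"
    using minus_one_powi_diff[of s 1] by simp
  have weight_pred: "q powi (((s - 1) * (s - 1) - (s - 1)) div 2) = q powi ((s * s - s) div 2) * q / Y"
    using triangular_diff[of s 1] by (simp add: powi_add powi_diff Y_def)
  have diff_shift: "qinv q (n - (s - 1)) = qinv q (n + 1 - s)"
    by (simp add: algebra_simps)
  have z_pred: "z powi (s - 1) = z powi s / z"
    using \<open>z \<noteq> 0\<close> by (simp add: power_int_diff)
  have T_succ: "q_binomial_term z (n + 1) s = (1 - q * Nq) * B"
    unfolding q_binomial_term_def B_def using top_rec by (simp add: mult_ac)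
  have T: "q_binomial_term z n s = (1 - q * Nq / Y) * B"
    unfolding q_binomial_term_def B_def using diff_pred by (simp add: mult_ac)
  have T_pred: "q_binomial_term z n (s - 1) = - (q / Y) * (1 - Y) / z * B"
    unfolding q_binomial_term_def B_def using s_pred diff_shift sign_pred weight_pred z_pred
    by (simp add: mult_ac)
  show ?thesis
    unfolding T_succ T T_pred using Y \<open>z \<noteq> 0\<close> by (simp add: Nq_def[symmetric] field_simps)
qed

lemma q_binomial_theorem:
  assumes "z \<noteq> 0"
  shows "(\<Prod>i<n. 1 - z * q ^ i) = (\<Sum>s\<in>{0..int n}. q_binomial_term z (int n) s)"
proof (induction n)
  case 0
  then show ?case by (simp add: q_binomial_term_def qinv_0 qpoch_nonpos)
next
  case (Suc n)
  define m where "m = int n"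
  have "m \<ge> 0" unfolding m_def by simp
  have vanish: "q_binomial_term z m (m + 1) = 0" "q_binomial_term z m (-1) = 0"
    by (simp_all add: q_binomial_term_def qinv_neg)
  have "(\<Sum>s\<in>{0..m + 1}. q_binomial_term z (m + 1) s)
      = (\<Sum>s\<in>{0..m + 1}. q_binomial_term z m s)
        - z * q powi m * (\<Sum>s\<in>{0..m + 1}. q_binomial_term z m (s - 1))"
    using q_binomial_term_rec[OF \<open>m \<ge> 0\<close> assms] by (simp add: sum_subtractf sum_distrib_left)
  also have "(\<Sum>s\<in>{0..m + 1}. q_binomial_term z m s) = (\<Sum>s\<in>{0..m}. q_binomial_term z m s)"
proof -
    have "{0..m + 1} = insert (m + 1) {0..m}" using \<open>m \<ge> 0\<close> by auto
    then show ?thesis using vanish by simp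
  qed
  also have "(\<Sum>s\<in>{0..m + 1}. q_binomial_term z m (s - 1)) = (\<Sum>s\<in>{-1..m}. q_binomial_term z m s)"
    by (rule sum.reindex_bij_witness[of _ "\<lambda>s. s + 1" "\<lambda>s. s - 1"]) auto
  also have "\<dots> = (\<Sum>s\<in>{0..m}. q_binomial_term z m s)"
proof -
    have "{-1..m} = insert (-1) {0..m}" using \<open>m \<ge> 0\<close> by auto
    then show ?thesis using vanish by simp
  qed
  finally have "(\<Sum>s\<in>{0..m + 1}. q_binomial_term z (m + 1) s)
      = (\<Sum>s\<in>{0..m}. q_binomial_term z m s) * (1 - z * q ^ n)"
    by (simp add: m_def algebra_simps)
  then show ?case using Suc.IH by (simp add: m_def add.commute)
qed

lemma prod_shifted_qpoch:
  assumes "j \<ge> 0" "e \<ge> 0"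
  shows "(\<Prod>i<nat (2 * j + e). 1 - q powi (1 - j) * q ^ i) = (if j = 0 then qpoch q e else 0)"
proof (cases "j = 0")
  case True
  then show ?thesis
    using qpoch_of_nat[of q "nat e"] assms by simp
next
  case False
  have "q ^ nat (j - 1) = q powi (j - 1)"
    using False assms by (simp add: power_int_def)
  then have "1 - q powi (1 - j) * q ^ nat (j - 1) = 0"
    by (simp flip: powi_add)
  moreover have "nat (j - 1) \<in> {..<nat (2 * j + e)}"
    using False assms by simp
  ultimately show ?thesis
    using False by (metis finite_lessThan prod_zero)
qed

definition bailey_kernel :: "int \<Rightarrow> int \<Rightarrow> int \<Rightarrow> complex" where
  "bailey_kernel e j r = qinv q (j - r) * qinv q (j + r + e)"

lemma unit_bailey_pair:
  assumes "j \<ge> 0" "e \<ge> 0"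
  shows "(\<Sum>r\<in>{-j-e..j}. (-1) powi r * q powi ((r * r - r) div 2) * bailey_kernel e j r)
       = (if j = 0 then 1 else 0)"
proof -
  define n where "n = 2 * j + e"
  define z where "z = q powi (1 - j)"
  define C where "C = (-1) powi j * q powi ((j * j - j) div 2) * qinv q n"
  text \<open>After the substitution r = j - s the sum is C times the q-binomial expansion
    of (q^(1-j); q)_n.\<close>
  have "n \<ge> 0" "z \<noteq> 0"
    using assms q_nonzero unfolding n_def z_def by simp_all
  have "(\<Sum>r\<in>{-j-e..j}. (-1) powi r * q powi ((r * r - r) div 2) * bailey_kernel e j r)
      = (\<Sum>s\<in>{0..n}. (-1) powi (j - s) * q powi (((j - s) * (j - s) - (j - s)) div 2) * bailey_kernel e j (j - s))"
    by (rule sum.reindex_bij_witness[of _ "\<lambda>s. j - s" "\<lambda>r. j - r"]) (auto simp: n_def)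
  also have "\<dots> = (\<Sum>s\<in>{0..n}. C * q_binomial_term z n s)"
  proof (rule sum.cong[OF refl])
    fix s
    have "q powi ((1 - j) * s) = z powi s"
      unfolding z_def by (simp add: power_int_mult)
    moreover have "bailey_kernel e j (j - s) = qinv q s * qinv q (n - s)"
      unfolding bailey_kernel_def n_def by (simp add: algebra_simps)
    moreover have "qpoch q n * qinv q n = 1"
      using qpoch_qinv \<open>n \<ge> 0\<close> by simp
    ultimately show "(-1) powi (j - s) * q powi (((j - s) * (j - s) - (j - s)) div 2) * bailey_kernel e j (j - s)
        = C * q_binomial_term z n s"
      unfolding C_def q_binomial_term_def minus_one_powi_diff triangular_diff powi_add
      by (simp add: mult_ac)
  qed
  also have "\<dots> = C * (\<Prod>i<nat n. 1 - z * q ^ i)"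
    using q_binomial_theorem[OF \<open>z \<noteq> 0\<close>, of "nat n"] \<open>n \<ge> 0\<close> by (simp add: sum_distrib_left)
  also have "\<dots> = (if j = 0 then 1 else 0)"
    using prod_shifted_qpoch[OF assms] qpoch_qinv[OF \<open>e \<ge> 0\<close>]
    unfolding C_def n_def z_def by (simp add: mult.commute)
  finally show ?thesis .
qed

section \<open>The Bailey transform\<close>

lemma bailey_kernel_reflect: "bailey_kernel e j (- r - e) = bailey_kernel e j r"
  unfolding bailey_kernel_def by (simp add: algebra_simps)

lemma sum_bailey_kernel_shift:
  assumes "r \<ge> 0"
  shows "(\<Sum>j\<in>{0..u}. f j * bailey_kernel e j r)
       = (\<Sum>i\<in>{0..u - r}. f (i + r) * qinv q i * qinv q (i + (2 * r + e)))"
proof -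
  have "(\<Sum>j\<in>{0..u}. f j * bailey_kernel e j r) = (\<Sum>j\<in>{r..u}. f j * bailey_kernel e j r)"
    by (rule sum.mono_neutral_right) (use assms in \<open>auto simp: bailey_kernel_def qinv_neg\<close>)
  also have "\<dots> = (\<Sum>i\<in>{0..u - r}. f (i + r) * bailey_kernel e (i + r) r)"
    by (rule sum.reindex_bij_witness[of _ "\<lambda>i. i + r" "\<lambda>j. j - r"]) auto
  finally show ?thesis
    unfolding bailey_kernel_def by (simp add: algebra_simps)
qed

lemma vandermonde_kernel_nonneg:
  assumes "k \<ge> 0" "u \<ge> 0" "e \<ge> 0" "r \<ge> 0"
  shows "(\<Sum>j\<in>{0..u}. q powi (j * j + e * j) * qinv q (k - j) * qinv q (u - j) * bailey_kernel e j r)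
       = q powi (r * r + e * r) * qpoch q (k + u + e) * bailey_kernel e k r * bailey_kernel e u r"
proof (cases "r \<le> k \<and> r \<le> u")
  case False
  have "(\<Sum>j\<in>{0..u}. q powi (j * j + e * j) * qinv q (k - j) * qinv q (u - j) * bailey_kernel e j r) = 0"
  proof (rule sum.neutral, rule ballI)
    fix j assume "j \<in> {0..u}"
    then have "j - r < 0 \<or> k - j < 0" using False by auto
    then show "q powi (j * j + e * j) * qinv q (k - j) * qinv q (u - j) * bailey_kernel e j r = 0"
      by (auto simp: bailey_kernel_def qinv_neg)
  qed
  moreover have "bailey_kernel e k r * bailey_kernel e u r = 0"
    using False by (auto simp: bailey_kernel_def qinv_neg)
  ultimately show ?thesis by simp
next
  case True
  have "(\<Sum>j\<in>{0..u}. q powi (j * j + e * j) * qinv q (k - j) * qinv q (u - j) * bailey_kernel e j r)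
      = (\<Sum>i\<in>{0..u - r}. q powi (r * r + e * r) * vandermonde_term (k - r) (u - r) (2 * r + e) i)"
    unfolding sum_bailey_kernel_shift[OF \<open>r \<ge> 0\<close>] powi_quadratic_shift vandermonde_term_def
    by (simp add: algebra_simps)
  also have "\<dots> = q powi (r * r + e * r) * qpoch q (k + u + e) * bailey_kernel e k r * bailey_kernel e u r"
    using q_vandermonde[of "k - r" "2 * r + e" "u - r"] True assms
    by (simp add: bailey_kernel_def sum_distrib_left[symmetric] algebra_simps)
  finally show ?thesis .
qed

lemma vandermonde_kernel:
  assumes "k \<ge> 0" "u \<ge> 0" "e \<in> {0, 1}"
  shows "(\<Sum>j\<in>{0..u}. q powi (j * j + e * j) * qinv q (k - j) * qinv q (u - j) * bailey_kernel e j r)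
       = q powi (r * r + e * r) * qpoch q (k + u + e) * bailey_kernel e k r * bailey_kernel e u r"
proof (cases "r \<ge> 0")
  case True
  then show ?thesis by (intro vandermonde_kernel_nonneg) (use assms in auto)
next
  case False
  text \<open>Since e \<le> 1, the reflection r \<mapsto> -r-e maps negative r to nonnegative ones.\<close>
  then have "- r - e \<ge> 0" "e \<ge> 0" using assms by auto
  then show ?thesis
    using vandermonde_kernel_nonneg[of k u e "- r - e"] assms
    by (simp add: bailey_kernel_reflect powi_quadratic_reflect)
qed

lemma saalschuetz_kernel_nonneg:
  assumes "l \<ge> 0" "m \<ge> 0" "n \<ge> 0" "e \<ge> 0" "r \<ge> 0"
  shows "(\<Sum>k\<in>{0..n}. q powi (k * k + e * k) * qpoch q (l + m + n + e - k)
            * qinv q (l - k) * qinv q (m - k) * qinv q (n - k) * bailey_kernel e k r)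
       = q powi (r * r + e * r) * qpoch q (l + m + e) * qpoch q (l + n + e) * qpoch q (m + n + e)
            * bailey_kernel e l r * bailey_kernel e m r * bailey_kernel e n r"
proof (cases "r \<le> l \<and> r \<le> m \<and> r \<le> n")
  case False
  have "(\<Sum>k\<in>{0..n}. q powi (k * k + e * k) * qpoch q (l + m + n + e - k)
          * qinv q (l - k) * qinv q (m - k) * qinv q (n - k) * bailey_kernel e k r) = 0"
  proof (rule sum.neutral, rule ballI)
    fix k assume "k \<in> {0..n}"
    then have "k - r < 0 \<or> l - k < 0 \<or> m - k < 0" using False by auto
    then show "q powi (k * k + e * k) * qpoch q (l + m + n + e - k)
        * qinv q (l - k) * qinv q (m - k) * qinv q (n - k) * bailey_kernel e k r = 0"
      by (auto simp: bailey_kernel_def qinv_neg)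
  qed
  moreover have "bailey_kernel e l r * bailey_kernel e m r * bailey_kernel e n r = 0"
    using False by (auto simp: bailey_kernel_def qinv_neg)
  ultimately show ?thesis by simp
next
  case True
  have "(\<Sum>k\<in>{0..n}. q powi (k * k + e * k) * qpoch q (l + m + n + e - k)
          * qinv q (l - k) * qinv q (m - k) * qinv q (n - k) * bailey_kernel e k r)
      = (\<Sum>i\<in>{0..n - r}. q powi (r * r + e * r) * saalschuetz_term (l - r) (m - r) (n - r) (2 * r + e) i)"
    unfolding sum_bailey_kernel_shift[OF \<open>r \<ge> 0\<close>] powi_quadratic_shift saalschuetz_term_def
    by (simp add: algebra_simps)
  also have "\<dots> = q powi (r * r + e * r) * qpoch q (l + m + e) * qpoch q (l + n + e) * qpoch q (m + n + e)
            * bailey_kernel e l r * bailey_kernel e m r * bailey_kernel e n r"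
    using q_saalschuetz[of "l - r" "m - r" "2 * r + e" "n - r"] True assms
    by (simp add: bailey_kernel_def sum_distrib_left[symmetric] algebra_simps)
  finally show ?thesis .
qed

lemma saalschuetz_kernel:
  assumes "l \<ge> 0" "m \<ge> 0" "n \<ge> 0" "e \<in> {0, 1}"
  shows "(\<Sum>k\<in>{0..n}. q powi (k * k + e * k) * qpoch q (l + m + n + e - k)
            * qinv q (l - k) * qinv q (m - k) * qinv q (n - k) * bailey_kernel e k r)
       = q powi (r * r + e * r) * qpoch q (l + m + e) * qpoch q (l + n + e) * qpoch q (m + n + e)
            * bailey_kernel e l r * bailey_kernel e m r * bailey_kernel e n r"
proof (cases "r \<ge> 0")
  case True
  then show ?thesis by (intro saalschuetz_kernel_nonneg) (use assms in auto)
next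
  case False
  then have "- r - e \<ge> 0" "e \<ge> 0" using assms by auto
  then show ?thesis
    using saalschuetz_kernel_nonneg[of l m n e "- r - e"] assms
    by (simp add: bailey_kernel_reflect powi_quadratic_reflect)
qed

lemma unit_bailey_pair_vandermonde:
  assumes "k \<ge> 0" "u \<ge> 0" "e \<in> {0, 1}"
  shows "(\<Sum>r\<in>{-u-1..u}. (-1) powi r * q powi ((r * r - r) div 2)
            * (q powi (r * r + e * r) * bailey_kernel e k r * bailey_kernel e u r))
       = qinv q (k + u + e) * qinv q k * qinv q u"
proof -
  define \<alpha> where "\<alpha> r = (-1) powi r * q powi ((r * r - r) div 2)" for r
  define w where "w r = q powi (r * r + e * r)" for r
  have "e \<ge> 0" "e \<le> 1" using assms by auto
  have unit: "(\<Sum>r\<in>{-u-1..u}. \<alpha> r * bailey_kernel e j r) = (if j = 0 then 1 else 0)"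
    if "j \<in> {0..u}" for j
proof -
    have "(\<Sum>r\<in>{-u-1..u}. \<alpha> r * bailey_kernel e j r) = (\<Sum>r\<in>{-j-e..j}. \<alpha> r * bailey_kernel e j r)"
      by (rule sum.mono_neutral_right) (use that \<open>e \<le> 1\<close> in \<open>auto simp: bailey_kernel_def qinv_neg\<close>)
    then show ?thesis
      using unit_bailey_pair[of j e] that \<open>e \<ge> 0\<close> unfolding \<alpha>_def by simp
  qed
  have vandermonde: "w r * bailey_kernel e k r * bailey_kernel e u r
      = qinv q (k + u + e) * (\<Sum>j\<in>{0..u}. w j * qinv q (k - j) * qinv q (u - j) * bailey_kernel e j r)" for r
proof -
    have "(\<Sum>j\<in>{0..u}. w j * qinv q (k - j) * qinv q (u - j) * bailey_kernel e j r)
        = qpoch q (k + u + e) * (w r * bailey_kernel e k r * bailey_kernel e u r)"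
      using vandermonde_kernel[of k u e r] assms unfolding w_def by (simp add: mult_ac)
    moreover have "qinv q (k + u + e) * qpoch q (k + u + e) = 1"
      using qpoch_qinv[of "k + u + e"] assms \<open>e \<ge> 0\<close> by (simp add: mult.commute)
    ultimately show ?thesis by (simp add: mult.assoc[symmetric])
  qed
  have "(\<Sum>r\<in>{-u-1..u}. \<alpha> r * (w r * bailey_kernel e k r * bailey_kernel e u r))
      = qinv q (k + u + e) * (\<Sum>j\<in>{0..u}. w j * qinv q (k - j) * qinv q (u - j)
          * (\<Sum>r\<in>{-u-1..u}. \<alpha> r * bailey_kernel e j r))"
    unfolding vandermonde sum_distrib_left
    by (subst sum.swap) (simp add: mult_ac)
  also have "\<dots> = qinv q (k + u + e) * (\<Sum>j\<in>{0..u}. if j = 0 then w j * qinv q (k - j) * qinv q (u - j) else 0)"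
    by (intro arg_cong[where f = "\<lambda>x. qinv q (k + u + e) * x"] sum.cong refl) (simp add: unit)
  also have "\<dots> = qinv q (k + u + e) * qinv q k * qinv q u"
    using assms by (simp add: w_def)
  finally show ?thesis
    unfolding \<alpha>_def w_def .
qed

lemma bailey_identity:
  assumes "l \<ge> 0" "m \<ge> 0" "n \<ge> 0" "u \<ge> 0" "e \<in> {0, 1}"
  shows "(\<Sum>k\<in>{0..n}. q powi (k * k + e * k) * qpoch q (l + m + n + e - k)
            * qinv q (l - k) * qinv q (m - k) * qinv q (n - k) * qinv q k * qinv q (u + k + e))
       = qpoch q u * (\<Sum>r\<in>{-u-1..u}. (-1) powi r * q powi ((r * r - r) div 2)
            * q powi (r * r + e * r) * q powi (r * r + e * r)
            * qpoch q (l + m + e) * qpoch q (l + n + e) * qpoch q (m + n + e)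
            * bailey_kernel e l r * bailey_kernel e m r * bailey_kernel e n r * bailey_kernel e u r)"
proof -
  define \<alpha> where "\<alpha> r = (-1) powi r * q powi ((r * r - r) div 2)" for r
  define w where "w r = q powi (r * r + e * r)" for r
  define c where "c k = q powi (k * k + e * k) * qpoch q (l + m + n + e - k)
    * qinv q (l - k) * qinv q (m - k) * qinv q (n - k)" for k
  define P where "P r = qpoch q (l + m + e) * qpoch q (l + n + e) * qpoch q (m + n + e)
    * bailey_kernel e l r * bailey_kernel e m r * bailey_kernel e n r" for r
  have saalschuetz: "(\<Sum>k\<in>{0..n}. c k * bailey_kernel e k r) = w r * P r" for r
    using saalschuetz_kernel[of l m n e r] assms unfolding c_def w_def P_def by (simp add: mult_ac)
  have "qpoch q u * (\<Sum>r\<in>{-u-1..u}. (-1) powi r * q powi ((r * r - r) div 2)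
            * q powi (r * r + e * r) * q powi (r * r + e * r)
            * qpoch q (l + m + e) * qpoch q (l + n + e) * qpoch q (m + n + e)
            * bailey_kernel e l r * bailey_kernel e m r * bailey_kernel e n r * bailey_kernel e u r)
      = qpoch q u * (\<Sum>r\<in>{-u-1..u}. \<alpha> r * w r * bailey_kernel e u r * (w r * P r))"
    unfolding \<alpha>_def w_def P_def by (simp add: mult_ac)
  also have "\<dots> = qpoch q u * (\<Sum>k\<in>{0..n}. c k
      * (\<Sum>r\<in>{-u-1..u}. \<alpha> r * (w r * bailey_kernel e k r * bailey_kernel e u r)))"
    unfolding saalschuetz[symmetric] sum_distrib_left
    by (subst sum.swap) (simp add: mult_ac)
  also have "\<dots> = qpoch q u * (\<Sum>k\<in>{0..n}. c k * (qinv q (k + u + e) * qinv q k * qinv q u))"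
    using unit_bailey_pair_vandermonde assms unfolding \<alpha>_def w_def
    by (intro arg_cong[where f = "\<lambda>x. qpoch q u * x"] sum.cong refl) simp
  also have "\<dots> = (\<Sum>k\<in>{0..n}. c k * qinv q k * qinv q (u + k + e)) * (qpoch q u * qinv q u)"
    by (simp add: sum_distrib_left sum_distrib_right add.commute[of _ u] mult_ac)
  also have "\<dots> = (\<Sum>k\<in>{0..n}. c k * qinv q k * qinv q (u + k + e))"
    using qpoch_qinv \<open>u \<ge> 0\<close> by simp
  finally show ?thesis
    unfolding c_def by simp
qed

end

section \<open>Finite sums as unordered infinite sums\<close>

lemma finite_support_infsum_eq:
  fixes f :: "'a \<Rightarrow> 'c::{topological_comm_monoid_add, t2_space}" and g :: "'b \<Rightarrow> 'c"
  assumes "finite A" "\<And>x. x \<notin> A \<Longrightarrow> f x = 0"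
    and "finite B" "\<And>y. y \<notin> B \<Longrightarrow> g y = 0"
    and "sum f A = sum g B"
  shows "f summable_on UNIV \<and> g summable_on UNIV \<and> infsum f UNIV = infsum g UNIV"
proof -
  have "(f has_sum sum f A) UNIV"
    by (rule has_sum_finite_neutralI) (use assms in auto)
  moreover have "(g has_sum sum g B) UNIV"
    by (rule has_sum_finite_neutralI) (use assms in auto)
  ultimately show ?thesis
    using assms(5) by (metis has_sum_imp_summable infsumI)
qed

lemma pentagonal_exponent_split:
  fixes r e :: int
  shows "(5 * r^2 + (4 * e - 1) * r) div 2 = (r * r - r) div 2 + 2 * (r * r + e * r)"
proof -
  have "5 * r^2 + (4 * e - 1) * r = (r * r - r) + 2 * (2 * (r * r + e * r))"
    by (simp add: power2_eq_square algebra_simps)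
  then show ?thesis by simp
qed

context q_not_root_of_unity
begin

lemma bailey_identity_infsum:
  fixes l m n u e :: nat
  assumes "e \<le> 1"
  shows "(\<lambda>k::nat. q ^ (k^2 + e * k) * qpoch q (int l + int m + int n - int k + int e)
            * qinv q (int k) * qinv q (int l - int k) * qinv q (int m - int k)
            * qinv q (int n - int k) * qinv q (int u + int k + int e)) summable_on UNIV
       \<and> (\<lambda>k::int. (-1) powi k * q powi ((5 * k^2 + (4 * int e - 1) * k) div 2)
            * qpoch q (int l + int m + int e) * qpoch q (int l + int n + int e) * qpoch q (int m + int n + int e) * qpoch q (int u)
            * qinv q (int l - k) * qinv q (int m - k) * qinv q (int n - k) * qinv q (int u - k)
            * qinv q (int l + k + int e) * qinv q (int m + k + int e) * qinv q (int n + k + int e) * qinv q (int u + k + int e))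
           summable_on UNIV
       \<and> (\<Sum>\<^sub>\<infinity>k::nat. q ^ (k^2 + e * k) * qpoch q (int l + int m + int n - int k + int e)
            * qinv q (int k) * qinv q (int l - int k) * qinv q (int m - int k)
            * qinv q (int n - int k) * qinv q (int u + int k + int e))
         = (\<Sum>\<^sub>\<infinity>k::int. (-1) powi k * q powi ((5 * k^2 + (4 * int e - 1) * k) div 2)
            * qpoch q (int l + int m + int e) * qpoch q (int l + int n + int e) * qpoch q (int m + int n + int e) * qpoch q (int u)
            * qinv q (int l - k) * qinv q (int m - k) * qinv q (int n - k) * qinv q (int u - k)
            * qinv q (int l + k + int e) * qinv q (int m + k + int e) * qinv q (int n + k + int e) * qinv q (int u + k + int e))"
proof (rule finite_support_infsum_eq[where A = "{..n}" and B = "{-int u-1..int u}"], goal_cases)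
  case 5
  have "int e \<in> {0, 1}" using assms by auto
  have nat_weight: "q ^ (k^2 + e * k) = q powi (int k * int k + int e * int k)" for k
    by (metis power_int_of_nat of_nat_add of_nat_mult power2_eq_square)
  have int_weight: "q powi ((5 * r^2 + (4 * int e - 1) * r) div 2)
      = q powi ((r * r - r) div 2) * q powi (r * r + int e * r) * q powi (r * r + int e * r)" for r
    unfolding pentagonal_exponent_split mult_2 powi_add by (simp add: mult_ac)
  show ?case
    using bailey_identity[of "int l" "int m" "int n" "int u" "int e"] \<open>int e \<in> {0, 1}\<close>
    unfolding nat_weight int_weight sum_atMost_of_nat[where f = "\<lambda>k. q powi (k * k + int e * k)
      * qpoch q (int l + int m + int n - k + int e) * qinv q k * qinv q (int l - k) * qinv q (int m - k)
      * qinv q (int n - k) * qinv q (int u + k + int e)"]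
    by (simp add: bailey_kernel_def sum_distrib_left algebra_simps)
qed (use assms in \<open>auto simp: qinv_neg\<close>)

end

theorem corollary5p3:
  fixes q :: complex and l m n u :: nat
  assumes "0 < norm q" and "norm q < 1"
  shows "(\<lambda>k::nat. q ^ (k^2) * qpoch q (int l + int m + int n - int k)
            * qinv q (int k) * qinv q (int l - int k) * qinv q (int m - int k)
            * qinv q (int n - int k) * qinv q (int u + int k)) summable_on UNIV
       \<and> (\<lambda>k::int. (-1) powi k * q powi ((5 * k^2 - k) div 2)
            * qpoch q (int l + int m) * qpoch q (int l + int n) * qpoch q (int m + int n) * qpoch q (int u)
            * qinv q (int l - k) * qinv q (int m - k) * qinv q (int n - k) * qinv q (int u - k)
            * qinv q (int l + k) * qinv q (int m + k) * qinv q (int n + k) * qinv q (int u + k))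
           summable_on UNIV
       \<and> (\<Sum>\<^sub>\<infinity>k::nat. q ^ (k^2) * qpoch q (int l + int m + int n - int k)
            * qinv q (int k) * qinv q (int l - int k) * qinv q (int m - int k)
            * qinv q (int n - int k) * qinv q (int u + int k))
         = (\<Sum>\<^sub>\<infinity>k::int. (-1) powi k * q powi ((5 * k^2 - k) div 2)
            * qpoch q (int l + int m) * qpoch q (int l + int n) * qpoch q (int m + int n) * qpoch q (int u)
            * qinv q (int l - k) * qinv q (int m - k) * qinv q (int n - k) * qinv q (int u - k)
            * qinv q (int l + k) * qinv q (int m + k) * qinv q (int n + k) * qinv q (int u + k))
       \<and> (\<lambda>k::nat. q ^ (k^2 + k) * qpoch q (int l + int m + int n - int k + 1)
            * qinv q (int k) * qinv q (int l - int k) * qinv q (int m - int k)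
            * qinv q (int n - int k) * qinv q (int u + int k + 1)) summable_on UNIV
       \<and> (\<lambda>k::int. (-1) powi k * q powi ((5 * k^2 + 3 * k) div 2)
            * qpoch q (int l + int m + 1) * qpoch q (int l + int n + 1) * qpoch q (int m + int n + 1) * qpoch q (int u)
            * qinv q (int l - k) * qinv q (int m - k) * qinv q (int n - k) * qinv q (int u - k)
            * qinv q (int l + k + 1) * qinv q (int m + k + 1) * qinv q (int n + k + 1) * qinv q (int u + k + 1))
           summable_on UNIV
       \<and> (\<Sum>\<^sub>\<infinity>k::nat. q ^ (k^2 + k) * qpoch q (int l + int m + int n - int k + 1)
            * qinv q (int k) * qinv q (int l - int k) * qinv q (int m - int k)
            * qinv q (int n - int k) * qinv q (int u + int k + 1))
         = (\<Sum>\<^sub>\<infinity>k::int. (-1) powi k * q powi ((5 * k^2 + 3 * k) div 2)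
            * qpoch q (int l + int m + 1) * qpoch q (int l + int n + 1) * qpoch q (int m + int n + 1) * qpoch q (int u)
            * qinv q (int l - k) * qinv q (int m - k) * qinv q (int n - k) * qinv q (int u - k)
            * qinv q (int l + k + 1) * qinv q (int m + k + 1) * qinv q (int n + k + 1) * qinv q (int u + k + 1))"
proof -
  interpret q_not_root_of_unity q
  proof
    show "q \<noteq> 0" using assms by auto
    show "q ^ k \<noteq> 1" if "k > 0" for k
      using assms that norm_power[of q k] power_less_one_iff[of "norm q" k] by fastforce
  qed
  show ?thesis
    using bailey_identity_infsum[of 0 l m n u] bailey_identity_infsum[of 1 l m n u] by simp
qed

end
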